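(* Let $p>2$ be a prime and $d>0$ an integer with $d\not\equiv 0\pmod p$, and suppose $-1\in QR_p$. Let $N_p$ be the number of solutions $(x,y)\in\mathbb{Z}_p\times\mathbb{Z}_p$ of $$y^2\equiv x^3-d^2x \pmod p,$$ and let $n_1$ be the number of distinct fourth powers $u=y^4\in\mathbb{Z}_p^*$ ($y\in\mathbb{Z}_p^*$) such that $u-1\in QR_p$. Then $$N_p=8n_1+7 \text{ if } d\in QR_p,\qquad N_p=-8n_1+2p-7 \text{ if } d\in QNR_p .$$
   Context: $\mathbb{Z}_p$ denotes the integers modulo $p$, $\mathbb{Z}_p^*=\{1,\dots,p-1\}$. $QR_p=\{x\in\mathbb{Z}_p^*: \exists y\in\mathbb{Z}_p^*,\ y^2\equiv x \pmod p\}$ is the set of nonzero quadratic residues modulo $p$ and $QNR_p=\mathbb{Z}_p^*\setminus QR_p$ the set of quadratic nonresidues; $d$ is regarded as an element of $\mathbb{Z}_p^*$ via reduction mod $p$. *)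

theory Defs
  imports "HOL-Number_Theory.Number_Theory"
begin

text \<open>Z_p^* = {1..p-1}; residues are represented by integers in {0..p-1}.\<close>

definition QR :: "int \<Rightarrow> int set" where
  "QR p = {x \<in> {1..p-1}. \<exists>y \<in> {1..p-1}. [y^2 = x] (mod p)}"

definition QNR :: "int \<Rightarrow> int set" where
  "QNR p = {1..p-1} - QR p"

definition Np :: "int \<Rightarrow> int \<Rightarrow> nat" where
  "Np p d = card {(x, y). x \<in> {0..p-1} \<and> y \<in> {0..p-1} \<and> [y^2 = x^3 - d^2 * x] (mod p)}"

definition n1 :: "int \<Rightarrow> nat" where
  "n1 p = card {u. (\<exists>y \<in> {1..p-1}. u = (y^4) mod p) \<and> (u - 1) mod p \<in> QR p}"

end

theory Submission
  imports Defs
begin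

text \<open>
  Counting the square roots of each right-hand side gives
  \<open>N\<^sub>p = p + \<Sum>\<^sub>x (x\<^sup>3 - d\<^sup>2x | p)\<close>, and the substitution \<open>x = dt\<close> pulls out
  \<open>(d\<^sup>3 | p) = (d | p)\<close>, leaving \<open>S = \<Sum>\<^sub>t (t | p)(t\<^sup>2 - 1 | p)\<close>.
  Write \<open>ab = (1 + a)(1 + b) - 1 - a - b\<close>: the symbols \<open>(t | p)\<close> sum to \<open>0\<close>, the
  symbols \<open>(t\<^sup>2 - 1 | p)\<close> sum to \<open>-1\<close> (the conic \<open>y\<^sup>2 = x\<^sup>2 - 1\<close> has \<open>p - 1\<close> points,
  parametrised by \<open>x - y\<close>), and away from \<open>t = 0, \<plusminus>1\<close> the product
  \<open>(1 + (t | p))(1 + (t\<^sup>2 - 1 | p))\<close> is \<open>4\<close> or \<open>0\<close> according as \<open>t\<close> and \<open>t\<^sup>2 - 1\<close> are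
  both squares or not. When \<open>-1\<close> is a square, \<open>t \<mapsto> t\<^sup>2\<close> maps these \<open>t\<close> two-to-one
  onto the fourth powers \<open>u\<close> with \<open>u - 1\<close> a square, so there are \<open>2n\<^sub>1\<close> of them
  and \<open>S = 8n\<^sub>1 + 7 - p\<close>.
\<close>

definition QR_with_sq_minus_1_QR :: "int \<Rightarrow> int set" where
  "QR_with_sq_minus_1_QR p = {t \<in> {0..p-1}. Legendre t p = 1 \<and> Legendre (t^2 - 1) p = 1}"

lemma bij_betw_mult_mod:
  fixes m d :: int
  assumes "m > 0" and "coprime d m"
  shows "bij_betw (\<lambda>t. (d * t) mod m) {0..m-1} {0..m-1}"
proof -
  have "inj_on (\<lambda>t. (d * t) mod m) {0..m-1}"
  proof (rule inj_onI)
    fix s t assume "s \<in> {0..m-1}" "t \<in> {0..m-1}" "(d * s) mod m = (d * t) mod m"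
    then show "s = t"
      using cong_mult_lcancel[OF assms(2)] by (simp add: cong_def)
  qed
  moreover have "(\<lambda>t. (d * t) mod m) ` {0..m-1} \<subseteq> {0..m-1}"
    using assms(1) by auto
  ultimately show ?thesis
    by (simp add: bij_betw_def card_image card_subset_eq)
qed

context
  fixes p :: int
  assumes p_prime: "prime p" and p_gt_2: "p > 2"
begin

lemma Legendre_values: "Legendre a p \<in> {-1, 0, 1}"
  by (auto simp: Legendre_def)

lemma Legendre_eq_0_iff: "Legendre a p = 0 \<longleftrightarrow> [a = 0] (mod p)"
  by (simp add: Legendre_def)

lemma Legendre_cong:
  assumes "[a = b] (mod p)"
  shows "Legendre a p = Legendre b p"
proof -
  have "[a = 0] (mod p) \<longleftrightarrow> [b = 0] (mod p)"
    using assms cong_sym cong_trans by blast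
  moreover have "QuadRes p a \<longleftrightarrow> QuadRes p b"
    unfolding QuadRes_def using assms cong_sym cong_trans by blast
  ultimately show ?thesis
    by (simp add: Legendre_def)
qed

lemma cong_sign_imp_eq:
  assumes "x \<in> {-1, 0, 1}" and "y \<in> {-1, 0, 1}" and "[x = y] (mod p)"
  shows "x = y"
  using assms p_gt_2 by (auto simp: cong_iff_dvd_diff zdvd_not_zless)

lemma Legendre_mult: "Legendre (a * b) p = Legendre a p * Legendre b p"
proof (rule cong_sign_imp_eq)
  have euler: "[Legendre c p = c ^ nat ((p - 1) div 2)] (mod p)" for c
    using euler_criterion[of "nat p" c] p_prime p_gt_2
    by (simp add: nat_div_distrib nat_diff_distrib)
  show "[Legendre (a * b) p = Legendre a p * Legendre b p] (mod p)"
    using euler[of "a * b"] cong_mult[OF euler[of a] euler[of b]]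
    by (metis cong_sym cong_trans power_mult_distrib)
  show "Legendre a p * Legendre b p \<in> {-1, 0, 1}"
    using Legendre_values[of a] Legendre_values[of b] by auto
qed (rule Legendre_values)

lemma nonzero_mod_in_units:
  assumes "b mod p \<noteq> 0"
  shows "b mod p \<in> {1..p-1}"
proof -
  have "0 \<le> b mod p" "b mod p < p"
    using p_gt_2 by simp_all
  with assms show ?thesis
    by simp
qed

lemma Legendre_eq_1_iff_QR: "Legendre a p = 1 \<longleftrightarrow> a mod p \<in> QR p"
proof
  assume "Legendre a p = 1"
  then have a: "\<not> [a = 0] (mod p)" and "QuadRes p a"
    by (auto simp: Legendre_def split: if_splits)
  then obtain y where y: "[y^2 = a] (mod p)"
    unfolding QuadRes_def by blast
  then have y_mod: "[(y mod p)^2 = a mod p] (mod p)"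
    by (simp add: cong_def power_mod)
  moreover have "a mod p \<noteq> 0"
    using a by (simp add: cong_def)
  moreover from calculation have "y mod p \<noteq> 0"
    by (auto simp: cong_def)
  ultimately show "a mod p \<in> QR p"
    unfolding QR_def using nonzero_mod_in_units by blast
next
  assume "a mod p \<in> QR p"
  then obtain y where "a mod p \<noteq> 0" "[y^2 = a mod p] (mod p)"
    unfolding QR_def by auto
  then show "Legendre a p = 1"
    unfolding Legendre_def QuadRes_def by (auto simp: cong_def)
qed

lemma cong_square_iff: "[t^2 = w^2] (mod p) \<longleftrightarrow> [t = w] (mod p) \<or> [t = -w] (mod p)"
proof -
  have "[t^2 = w^2] (mod p) \<longleftrightarrow> p dvd (t - w) * (t + w)"
    by (simp add: cong_iff_dvd_diff power2_eq_square algebra_simps)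
  also have "\<dots> \<longleftrightarrow> p dvd t - w \<or> p dvd t + w"
    using p_prime by (simp add: prime_dvd_mult_iff)
  finally show ?thesis
    by (simp add: cong_iff_dvd_diff)
qed

lemma square_roots_mod:
  assumes "[r^2 = a] (mod p)"
  shows "{y \<in> {0..p-1}. [y^2 = a] (mod p)} = {r mod p, (-r) mod p}"
proof -
  have "[y^2 = a] (mod p) \<longleftrightarrow> y = r mod p \<or> y = (-r) mod p" if "y \<in> {0..p-1}" for y
  proof -
    have "[y^2 = a] (mod p) \<longleftrightarrow> [y = r] (mod p) \<or> [y = -r] (mod p)"
      using assms cong_square_iff cong_sym cong_trans by blast
    moreover have "y mod p = y"
      using that by simp
    ultimately show ?thesis
      by (simp add: cong_def)
  qed
  moreover have "r mod p \<in> {0..p-1}" "(-r) mod p \<in> {0..p-1}"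
    using p_gt_2 by simp_all
  ultimately show ?thesis
    by blast
qed

lemma mod_neq_neg_mod:
  assumes "\<not> [r = 0] (mod p)"
  shows "r mod p \<noteq> (-r) mod p"
proof
  assume "r mod p = (-r) mod p"
  then have "p dvd 2 * r"
    by (simp add: mod_eq_dvd_iff)
  moreover have "\<not> p dvd 2"
    using p_gt_2 by (simp add: zdvd_not_zless)
  ultimately show False
    using assms p_prime by (simp add: prime_dvd_mult_iff cong_0_iff)
qed

lemma card_square_roots: "int (card {y \<in> {0..p-1}. [y^2 = a] (mod p)}) = 1 + Legendre a p"
proof (cases "QuadRes p a")
  case True
  then obtain r where r: "[r^2 = a] (mod p)"
    unfolding QuadRes_def by blast
  have "[r^2 = 0^2] (mod p) \<longleftrightarrow> [a = 0] (mod p)"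
    using r cong_sym cong_trans by (metis power_zero_numeral)
  then have r_0: "[r = 0] (mod p) \<longleftrightarrow> [a = 0] (mod p)"
    using cong_square_iff[of r 0] by simp
  show ?thesis
  proof (cases "[a = 0] (mod p)")
    case True
    then have "r mod p = 0" "(-r) mod p = 0"
      using r_0 by (simp_all add: cong_0_iff)
    then show ?thesis
      using True square_roots_mod[OF r] by (simp add: Legendre_def)
  next
    case False
    then have "r mod p \<noteq> (-r) mod p"
      using r_0 mod_neq_neg_mod by blast
    then show ?thesis
      using False \<open>QuadRes p a\<close> square_roots_mod[OF r] by (simp add: Legendre_def)
  qed
next
  case False
  then have no_roots: "{y \<in> {0..p-1}. [y^2 = a] (mod p)} = {}"
    unfolding QuadRes_def by blast
  have "\<not> [a = 0] (mod p)"
    using False unfolding QuadRes_def by (metis cong_sym power_zero_numeral)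
  then show ?thesis
    unfolding no_roots using False by (simp add: Legendre_def)
qed

lemma card_solutions_square_eq:
  "int (card {(x, y). x \<in> {0..p-1} \<and> y \<in> {0..p-1} \<and> [y^2 = f x] (mod p)})
     = p + (\<Sum>x\<in>{0..p-1}. Legendre (f x) p)"
proof -
  have solutions_eq: "{(x, y). x \<in> {0..p-1} \<and> y \<in> {0..p-1} \<and> [y^2 = f x] (mod p)}
      = (SIGMA x:{0..p-1}. {y \<in> {0..p-1}. [y^2 = f x] (mod p)})"
    by auto
  have "card {(x, y). x \<in> {0..p-1} \<and> y \<in> {0..p-1} \<and> [y^2 = f x] (mod p)}
      = (\<Sum>x\<in>{0..p-1}. card {y \<in> {0..p-1}. [y^2 = f x] (mod p)})"
    unfolding solutions_eq by (rule card_SigmaI) (auto intro: finite_subset[of _ "{0..p-1}"])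
  then have "int (card {(x, y). x \<in> {0..p-1} \<and> y \<in> {0..p-1} \<and> [y^2 = f x] (mod p)})
      = (\<Sum>x\<in>{0..p-1}. 1 + Legendre (f x) p)"
    by (simp only: of_nat_sum card_square_roots)
  also have "\<dots> = p + (\<Sum>x\<in>{0..p-1}. Legendre (f x) p)"
    using p_gt_2 by (simp add: sum.distrib)
  finally show ?thesis .
qed

lemma sum_Legendre_eq_0: "(\<Sum>a\<in>{0..p-1}. Legendre a p) = 0"
proof -
  have "[y^2 = x] (mod p) \<longleftrightarrow> x = y^2 mod p" if "x \<in> {0..p-1}" for x y
    using that by (auto simp: cong_def)
  then have graph: "{(x, y). x \<in> {0..p-1} \<and> y \<in> {0..p-1} \<and> [y^2 = x] (mod p)}
      = (\<lambda>y. (y^2 mod p, y)) ` {0..p-1}"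
    using p_gt_2 by auto
  have "inj_on (\<lambda>y. (y^2 mod p, y)) {0..p-1}"
    by (rule inj_onI) simp
  then have "int (card {(x, y). x \<in> {0..p-1} \<and> y \<in> {0..p-1} \<and> [y^2 = x] (mod p)}) = p"
    unfolding graph using p_gt_2 by (simp add: card_image)
  then show ?thesis
    using card_solutions_square_eq[of "\<lambda>x. x"] by linarith
qed

lemma coprime_2: "coprime 2 p"
  using p_prime p_gt_2 prime_odd_int by (simp add: coprime_commute)

lemma card_solutions_square_eq_square_minus_1:
  "int (card {(x, y). x \<in> {0..p-1} \<and> y \<in> {0..p-1} \<and> [y^2 = x^2 - 1] (mod p)}) = p - 1"
proof -
  define S where "S = {(x, y). x \<in> {0..p-1} \<and> y \<in> {0..p-1} \<and> [y^2 = x^2 - 1] (mod p)}"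
  define \<delta> where "\<delta> = (\<lambda>(x, y). (x - y) mod p)"
  have factored: "[(x - y) * (x + y) = 1] (mod p)" if "(x, y) \<in> S" for x y
  proof -
    have "(x - y) * (x + y) = 1 + ((x^2 - 1) - y^2)"
      by (simp add: power2_eq_square algebra_simps)
    moreover have "[1 + ((x^2 - 1) - y^2) = 1 + 0] (mod p)"
      using that unfolding S_def by (intro cong_add) (auto simp: cong_iff_dvd_diff dvd_diff_commute)
    ultimately show ?thesis
      by simp
  qed
  have "inj_on \<delta> S"
  proof (rule inj_onI, clarify)
    fix x y x' y'
    assume xy: "(x, y) \<in> S" and xy': "(x', y') \<in> S" and "\<delta> (x, y) = \<delta> (x', y')"
    then have diff: "[x - y = x' - y'] (mod p)"
      by (simp add: \<delta>_def cong_def)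
    \<comment> \<open>both sums are inverses of the common difference\<close>
    have "[(x + y) * 1 = (x + y) * ((x' - y') * (x' + y'))] (mod p)"
      using factored[OF xy'] by (intro cong_scalar_left) (rule cong_sym)
    then have "[x + y = (x + y) * ((x' - y') * (x' + y'))] (mod p)"
      by simp
    also have "[(x + y) * ((x' - y') * (x' + y')) = (x + y) * ((x - y) * (x' + y'))] (mod p)"
      using diff by (intro cong_mult cong_refl) (simp add: cong_sym)
    also have "(x + y) * ((x - y) * (x' + y')) = ((x - y) * (x + y)) * (x' + y')"
      by (simp add: algebra_simps)
    also have "[\<dots> = 1 * (x' + y')] (mod p)"
      using factored[OF xy] by (rule cong_scalar_right)
    finally have sum: "[x + y = x' + y'] (mod p)"
      by simp
    have "[x * 2 = x' * 2] (mod p)"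
      using cong_add[OF diff sum] by (simp add: algebra_simps)
    then have x_eq: "[x = x'] (mod p)"
      using coprime_2 cong_mult_rcancel by blast
    moreover have "[y = y'] (mod p)"
      using cong_diff[OF x_eq diff] by simp
    ultimately show "x = x' \<and> y = y'"
      using xy xy' unfolding S_def by (simp add: cong_def)
  qed
  moreover have "\<delta> ` S = {1..p-1}"
  proof
    show "\<delta> ` S \<subseteq> {1..p-1}"
    proof clarify
      fix x y assume xy: "(x, y) \<in> S"
      have "(x - y) mod p \<noteq> 0"
      proof
        assume "(x - y) mod p = 0"
        then have "[(x - y) * (x + y) = 0 * (x + y)] (mod p)"
          by (intro cong_scalar_right) (simp add: cong_def)
        then have "[1 = 0] (mod p)"
          using factored[OF xy] cong_sym cong_trans by (metis mult_zero_left)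
        then show False
          using p_gt_2 by (simp add: cong_def)
      qed
      then show "\<delta> (x, y) \<in> {1..p-1}"
        unfolding \<delta>_def using nonzero_mod_in_units by simp
    qed
  next
    show "{1..p-1} \<subseteq> \<delta> ` S"
    proof
      fix s assume s: "s \<in> {1..p-1}"
      then have "coprime s p"
        using p_prime by (simp add: prime_imp_coprime coprime_commute zdvd_not_zless)
      then obtain t where t: "[s * t = 1] (mod p)"
        using coprime_iff_invertible_int by blast
      obtain h where h: "[2 * h = 1] (mod p)"
        using coprime_2 coprime_iff_invertible_int by blast
      define x where "x = (h * (t + s)) mod p"
      define y where "y = (h * (t - s)) mod p"
      have x_cong: "[x = h * (t + s)] (mod p)" and y_cong: "[y = h * (t - s)] (mod p)"
        by (simp_all add: x_def y_def cong_def)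
      have "[x^2 - y^2 = (h * (t + s))^2 - (h * (t - s))^2] (mod p)"
        using x_cong y_cong by (intro cong_diff cong_pow)
      also have "(h * (t + s))^2 - (h * (t - s))^2 = (2 * h)^2 * (s * t)"
        by (simp add: power2_eq_square algebra_simps)
      also have "[\<dots> = 1^2 * 1] (mod p)"
        using h t by (intro cong_mult cong_pow)
      finally have "[y^2 = x^2 - 1] (mod p)"
        by (simp add: cong_iff_dvd_diff dvd_diff_commute algebra_simps)
      then have "(x, y) \<in> S"
        unfolding S_def x_def y_def using p_gt_2 by simp
      moreover have "[x - y = (2 * h) * s] (mod p)"
        using cong_diff[OF x_cong y_cong] by (simp add: algebra_simps)
      then have "[x - y = 1 * s] (mod p)"
        using h cong_scalar_right cong_trans by blast
      then have "\<delta> (x, y) = s"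
        using s by (simp add: \<delta>_def cong_def)
      ultimately show "s \<in> \<delta> ` S"
        by force
    qed
  qed
  ultimately have "card S = card {1..p-1}"
    using card_image by fastforce
  then show ?thesis
    using p_gt_2 by (simp add: S_def)
qed

lemma sum_Legendre_square_minus_1: "(\<Sum>x\<in>{0..p-1}. Legendre (x^2 - 1) p) = -1"
  using card_solutions_square_eq[of "\<lambda>x. x^2 - 1"] card_solutions_square_eq_square_minus_1
  by simp

lemma Legendre_square_minus_1_eq_0_iff:
  assumes "x \<in> {0..p-1}"
  shows "Legendre (x^2 - 1) p = 0 \<longleftrightarrow> x = 1 \<or> x = p - 1"
proof -
  have "Legendre (x^2 - 1) p = 0 \<longleftrightarrow> x \<in> {y \<in> {0..p-1}. [y^2 = 1] (mod p)}"
    using assms by (simp add: Legendre_eq_0_iff cong_iff_dvd_diff)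
  also have "\<dots> \<longleftrightarrow> x \<in> {1 mod p, (-1) mod p}"
    using square_roots_mod[of 1 1] by simp
  also have "\<dots> \<longleftrightarrow> x = 1 \<or> x = p - 1"
    using p_gt_2 by (simp add: zmod_zminus1_eq_if)
  finally show ?thesis .
qed


lemma sum_Legendre_cubic:
  "(\<Sum>t\<in>{0..p-1}. Legendre (t^3 - t) p)
     = 4 * int (card (QR_with_sq_minus_1_QR p)) + 5 + 2 * Legendre (-1) p - p"
proof -
  define P where "P = {0..p-1}"
  define X where "X = QR_with_sq_minus_1_QR p"
  define w where "w t = (1 + Legendre t p) * (1 + Legendre (t^2 - 1) p)" for t
  define E where "E = {0, 1, p - 1}"
  have L_0: "Legendre 0 p = 0"
    by (simp add: Legendre_eq_0_iff)
  have L_1: "Legendre 1 p = 1"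
  proof -
    have "QuadRes p 1"
      unfolding QuadRes_def by (rule exI[of _ 1]) simp
    then show ?thesis
      using p_gt_2 by (simp add: Legendre_def cong_def)
  qed
  have L_pred: "Legendre (p - 1) p = Legendre (-1) p"
    by (rule Legendre_cong) (simp add: cong_iff_dvd_diff)
  have L_1_pred: "Legendre (1^2 - 1) p = 0" "Legendre ((p - 1)^2 - 1) p = 0"
    using p_gt_2 Legendre_square_minus_1_eq_0_iff[of 1] Legendre_square_minus_1_eq_0_iff[of "p - 1"]
    by simp_all
  have w_outside_E: "w t = 4 * (if t \<in> X then 1 else 0)" if t: "t \<in> P - E" for t
  proof -
    have "Legendre t p \<noteq> 0"
      using t by (simp add: Legendre_eq_0_iff cong_def P_def E_def)
    moreover have "Legendre (t^2 - 1) p \<noteq> 0"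
      using t Legendre_square_minus_1_eq_0_iff[of t] by (simp add: P_def E_def)
    ultimately have "Legendre t p \<in> {-1, 1}" "Legendre (t^2 - 1) p \<in> {-1, 1}"
      using Legendre_values[of t] Legendre_values[of "t^2 - 1"] by auto
    then show ?thesis
      using t by (auto simp: w_def X_def P_def QR_with_sq_minus_1_QR_def)
  qed
  have "E \<inter> X = {}"
    using L_0 L_1_pred by (auto simp: E_def X_def QR_with_sq_minus_1_QR_def)
  have "(\<Sum>t\<in>P. w t - 4 * (if t \<in> X then 1 else 0))
      = (\<Sum>t\<in>E. w t - 4 * (if t \<in> X then 1 else 0))"
    using p_gt_2 w_outside_E by (intro sum.mono_neutral_right) (auto simp: P_def E_def)
  also have "\<dots> = w 0 + w 1 + w (p - 1)"
    using \<open>E \<inter> X = {}\<close> p_gt_2 by (auto simp: E_def)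
  also have "\<dots> = 4 + 2 * Legendre (-1) p"
    using L_0 L_1 L_pred L_1_pred by (simp add: w_def)
  finally have sum_w_minus_X: "(\<Sum>t\<in>P. w t - 4 * (if t \<in> X then 1 else 0)) = 4 + 2 * Legendre (-1) p" .
  have "X \<subseteq> P"
    by (auto simp: X_def P_def QR_with_sq_minus_1_QR_def)
  then have "(\<Sum>t\<in>P. if t \<in> X then 1 else 0) = int (card X)"
    using sum.inter_restrict[of P "\<lambda>_. 1 :: int" X] by (simp add: P_def Int_absorb1)
  with sum_w_minus_X have sum_w: "(\<Sum>t\<in>P. w t) = 4 * int (card X) + 4 + 2 * Legendre (-1) p"
    by (simp add: sum_subtractf sum_distrib_left[symmetric])
  have "Legendre (t^3 - t) p = w t - 1 - Legendre t p - Legendre (t^2 - 1) p" for t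
  proof -
    have "t^3 - t = t * (t^2 - 1)"
      by (simp add: power2_eq_square power3_eq_cube algebra_simps)
    then have "Legendre (t^3 - t) p = Legendre t p * Legendre (t^2 - 1) p"
      by (simp add: Legendre_mult)
    then show ?thesis
      by (simp add: w_def algebra_simps)
  qed
  then have "(\<Sum>t\<in>P. Legendre (t^3 - t) p)
      = (\<Sum>t\<in>P. w t) - p - (\<Sum>t\<in>P. Legendre t p) - (\<Sum>t\<in>P. Legendre (t^2 - 1) p)"
    using p_gt_2 by (simp add: sum_subtractf P_def)
  then show ?thesis
    using sum_w sum_Legendre_eq_0 sum_Legendre_square_minus_1 by (simp add: P_def X_def)
qed

lemma Legendre_square:
  assumes "\<not> [y = 0] (mod p)"
  shows "Legendre (y^2) p = 1"
proof -
  have "Legendre y p \<in> {-1, 1}"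
    using assms Legendre_values[of y] by (auto simp: Legendre_eq_0_iff)
  then show ?thesis
    by (auto simp: power2_eq_square Legendre_mult)
qed

lemma card_QR_with_sq_minus_1_QR:
  assumes minus_1: "Legendre (-1) p = 1"
  shows "card (QR_with_sq_minus_1_QR p) = 2 * n1 p"
proof -
  define X where "X = QR_with_sq_minus_1_QR p"
  define U where "U = {u. (\<exists>y \<in> {1..p-1}. u = (y^4) mod p) \<and> (u - 1) mod p \<in> QR p}"
  have "X \<subseteq> {0..p-1}"
    by (auto simp: X_def QR_with_sq_minus_1_QR_def)
  then have "finite X"
    by (rule finite_subset) simp
  have "U \<subseteq> {0..p-1}"
    using p_gt_2 by (auto simp: U_def)
  then have "finite U"
    by (rule finite_subset) simp
  have square_in_U: "t^2 mod p \<in> U" if t: "t \<in> X" for t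
  proof -
    have "t \<in> {0..p-1}" "Legendre t p = 1" "Legendre (t^2 - 1) p = 1"
      using t by (auto simp: X_def QR_with_sq_minus_1_QR_def)
    then obtain s where s: "s \<in> {1..p-1}" "[s^2 = t] (mod p)"
      using Legendre_eq_1_iff_QR[of t] by (auto simp: QR_def)
    then have "t^2 mod p = s^4 mod p"
      using cong_pow[OF s(2), of 2] by (simp add: cong_def power_mult[symmetric])
    moreover have "(t^2 mod p - 1) mod p \<in> QR p"
      using \<open>Legendre (t^2 - 1) p = 1\<close> by (simp add: Legendre_eq_1_iff_QR mod_diff_left_eq)
    ultimately show ?thesis
      using s(1) by (auto simp: U_def)
  qed
  have fibre: "{t \<in> X. t^2 mod p = u} = {t \<in> {0..p-1}. [t^2 = u] (mod p)}" if u: "u \<in> U" for u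
  proof -
    obtain y where y: "y \<in> {1..p-1}" "u = y^4 mod p" and "(u - 1) mod p \<in> QR p"
      using u by (auto simp: U_def)
    then have L_u_pred: "Legendre (u - 1) p = 1"
      by (simp add: Legendre_eq_1_iff_QR)
    have y_nonzero: "\<not> [y = 0] (mod p)"
      using y(1) by (simp add: cong_def)
    have "Legendre t p = 1" if "[t^2 = u] (mod p)" for t
    proof -
      have "[t^2 = (y^2)^2] (mod p)"
        using that y(2) by (simp add: cong_def power_mult[symmetric])
      then have "[t = y^2] (mod p) \<or> [t = -(y^2)] (mod p)"
        using cong_square_iff by blast
      moreover have "Legendre (-(y^2)) p = 1"
        using Legendre_mult[of "-1" "y^2"] minus_1 Legendre_square[OF y_nonzero] by simp
      ultimately show ?thesis
        using Legendre_cong[of t "y^2"] Legendre_cong[of t "-(y^2)"] Legendre_square[OF y_nonzero]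
        by auto
    qed
    moreover have "Legendre (t^2 - 1) p = 1" if "[t^2 = u] (mod p)" for t
      using Legendre_cong[OF cong_diff[OF that cong_refl[of 1]]] L_u_pred by simp
    moreover have "u mod p = u"
      using y(2) by simp
    ultimately show ?thesis
      by (auto simp: X_def QR_with_sq_minus_1_QR_def cong_def)
  qed
  have "Legendre u p = 1" if u: "u \<in> U" for u
  proof -
    obtain y where y: "y \<in> {1..p-1}" "u = y^4 mod p"
      using u by (auto simp: U_def)
    then have "Legendre u p = Legendre ((y^2)^2) p"
      by (intro Legendre_cong) (simp add: cong_def power_mult[symmetric])
    also have "\<dots> = 1"
      using y(1) cong_square_iff[of y 0] by (intro Legendre_square) (simp add: cong_def)
    finally show ?thesis .
  qed
  then have card_fibre: "card {t \<in> X. t^2 mod p = u} = 2" if "u \<in> U" for u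
    using card_square_roots[of u] fibre[OF that] that by simp
  have "(\<lambda>t. t^2 mod p) ` X \<subseteq> U"
    using square_in_U by blast
  then have "card X = (\<Sum>u\<in>U. card {t \<in> X. t^2 mod p = u})"
    using sum.group[OF \<open>finite X\<close> \<open>finite U\<close>, of _ "\<lambda>_. 1 :: nat"] by simp
  also have "\<dots> = 2 * card U"
    using card_fibre by simp
  finally show ?thesis
    by (simp add: X_def U_def n1_def)
qed

lemma Np_eq_sum_Legendre_cubic:
  assumes "\<not> [d = 0] (mod p)"
  shows "int (Np p d) = p + Legendre d p * (\<Sum>t\<in>{0..p-1}. Legendre (t^3 - t) p)"
proof -
  have "coprime d p"
    using assms prime_imp_coprime[OF p_prime] coprime_commute by (blast dest: cong_0_iff[THEN iffD2])
  then have scale: "bij_betw (\<lambda>t. (d * t) mod p) {0..p-1} {0..p-1}"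
    using p_gt_2 by (intro bij_betw_mult_mod) simp_all
  have L_d_cube: "Legendre (d^3) p = Legendre d p"
    using Legendre_square[OF assms] Legendre_mult[of d "d^2"]
    by (simp add: power2_eq_square power3_eq_cube mult.assoc)
  have "int (Np p d) = p + (\<Sum>x\<in>{0..p-1}. Legendre (x^3 - d^2 * x) p)"
    unfolding Np_def by (rule card_solutions_square_eq)
  also have "(\<Sum>x\<in>{0..p-1}. Legendre (x^3 - d^2 * x) p)
      = (\<Sum>t\<in>{0..p-1}. Legendre (((d * t) mod p)^3 - d^2 * ((d * t) mod p)) p)"
    using sum.reindex_bij_betw[OF scale, of "\<lambda>x. Legendre (x^3 - d^2 * x) p"] by simp
  also have "\<dots> = (\<Sum>t\<in>{0..p-1}. Legendre (d^3 * (t^3 - t)) p)"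
  proof (rule sum.cong)
    fix t
    have "[((d * t) mod p)^3 - d^2 * ((d * t) mod p) = (d * t)^3 - d^2 * (d * t)] (mod p)"
      by (intro cong_diff cong_mult cong_pow cong_refl) (simp_all add: cong_def)
    moreover have "(d * t)^3 - d^2 * (d * t) = d^3 * (t^3 - t)"
      by (simp add: power2_eq_square power3_eq_cube algebra_simps)
    ultimately show "Legendre (((d * t) mod p)^3 - d^2 * ((d * t) mod p)) p = Legendre (d^3 * (t^3 - t)) p"
      by (simp add: Legendre_cong)
  qed simp
  also have "\<dots> = Legendre d p * (\<Sum>t\<in>{0..p-1}. Legendre (t^3 - t) p)"
    by (simp add: Legendre_mult L_d_cube sum_distrib_left)
  finally show ?thesis .
qed

end

theorem lemma3:
  fixes p d :: int
  assumes "prime p" and "p > 2" and "d > 0" and "\<not> [d = 0] (mod p)"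
    and "(-1) mod p \<in> QR p"
  shows "(d mod p \<in> QR p \<longrightarrow> int (Np p d) = 8 * int (n1 p) + 7)
       \<and> (d mod p \<in> QNR p \<longrightarrow> int (Np p d) = -8 * int (n1 p) + 2 * p - 7)"
proof -
  have "Legendre (-1) p = 1"
    using assms(1,2,5) by (simp add: Legendre_eq_1_iff_QR)
  then have "(\<Sum>t\<in>{0..p-1}. Legendre (t^3 - t) p) = 8 * int (n1 p) + 7 - p"
    using assms(1,2) by (simp add: sum_Legendre_cubic card_QR_with_sq_minus_1_QR)
  then have N: "int (Np p d) = p + Legendre d p * (8 * int (n1 p) + 7 - p)"
    using assms(1,2,4) by (simp add: Np_eq_sum_Legendre_cubic)
  have "Legendre d p = 1" if "d mod p \<in> QR p"
    using that assms(1,2) by (simp add: Legendre_eq_1_iff_QR)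
  moreover have "Legendre d p = -1" if "d mod p \<in> QNR p"
    using that assms(1,2,4) Legendre_values[of p d] Legendre_eq_1_iff_QR[of p d]
      Legendre_eq_0_iff[of p d]
    by (auto simp: QNR_def)
  ultimately show ?thesis
    using N by simp
qed

end
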